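(* For all positive integers $k$, $$\sum_{n\ge0}\big|\mathcal A_{2n}^{(k)}\big|\,x^{2n+1}=(-1)^k\frac{x}{U_{2k}(x/2)}.$$
   Context: For integers $n\ge0$ and $k\ge1$, $\mathcal A_n^{(k)}$ is the set of all integer sequences $(a_1,\dots,a_n)$ with $1\le a_i\le k$ for all $i$ and $a_1\le a_2\ge a_3\le a_4\ge\cdots$ (i.e. $a_{2j-1}\le a_{2j}$ and $a_{2j}\ge a_{2j+1}$ whenever defined); $\mathcal A_0^{(k)}$ consists of the empty sequence only. $U_n$ is the Chebyshev polynomial of the second kind ($U_0=1$, $U_1(x)=2x$, $U_{n+1}(x)=2xU_n(x)-U_{n-1}(x)$). *)

theory Defs
  imports "HOL-Computational_Algebra.Formal_Power_Series"
begin

text \<open>Alternating sequences a_1 <= a_2 >= a_3 <= a_4 ... of length n with entries in {1..k},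
  represented as lists (0-based: position i even means xs!i <= xs!(i+1), odd means >=).\<close>
definition alt_seqs :: "nat \<Rightarrow> nat \<Rightarrow> nat list set" where
  "alt_seqs n k = {xs. length xs = n \<and> (\<forall>i<n. 1 \<le> xs ! i \<and> xs ! i \<le> k) \<and>
     (\<forall>i. i + 1 < n \<longrightarrow> (if even i then xs ! i \<le> xs ! (i+1) else xs ! i \<ge> xs ! (i+1)))}"

fun cheb_U :: "nat \<Rightarrow> 'a::comm_ring_1 \<Rightarrow> 'a" where
  "cheb_U 0 x = 1"
| "cheb_U (Suc 0) x = 2 * x"
| "cheb_U (Suc (Suc n)) x = 2 * x * cheb_U (Suc n) x - cheb_U n x"

end

theory Submission
  imports Defs
begin

text \<open>Let e(m, t) be the number of alternating sequences of length m ending in t. Removing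
  the last entry gives e(2n+2, b) = sum_{t <= b} e(2n+1, t) and e(2n+3, c) = sum_{c <= b <= k}
  e(2n+2, b), while e(2n+1, 1) = |A_2n|. For the series F_c = sum_n e(2n+1, c) x^(2n+1) and
  G_b = x (F_1 + ... + F_b) this means G_b = G_(b-1) + x F_b, F_c = F_(c+1) + x G_c for c < k,
  and F_k = x + x G_k. Up to alternating signs, G_0, F_1, G_1, F_2, ..., G_k therefore obey the
  recurrence v_(j+2) = x v_(j+1) - v_j of U_(j-1)(x/2), starting from v_0 = 0, so they are F_1
  times these polynomials; the last equation F_k = x + x G_k then becomes
  (-1)^k F_1 U_2k(x/2) = x.\<close>

lemma finite_alt_seqs: "finite (alt_seqs m k)"
proof (rule finite_subset)
  show "alt_seqs m k \<subseteq> {xs. set xs \<subseteq> {1..k} \<and> length xs = m}"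
    by (auto simp: alt_seqs_def in_set_conv_nth)
  show "finite {xs. set xs \<subseteq> {1..k} \<and> length xs = m}"
    by (rule finite_lists_length_eq) simp
qed

lemma alt_seqs_0: "alt_seqs 0 k = {[]}"
  by (auto simp: alt_seqs_def)

lemma last_in_alt_seqs:
  assumes "xs \<in> alt_seqs (Suc m) k"
  shows "last xs \<in> {1..k}"
proof -
  have "length xs = Suc m" using assms by (simp add: alt_seqs_def)
  hence "last xs = xs ! m" by (cases xs rule: rev_cases) auto
  thus ?thesis using assms by (auto simp: alt_seqs_def)
qed

lemma snoc_in_alt_seqs_iff:
  "xs @ [a] \<in> alt_seqs (Suc m) k \<longleftrightarrow> xs \<in> alt_seqs m k \<and> a \<in> {1..k} \<and>
     (m = 0 \<or> (if even (m - 1) then last xs \<le> a else a \<le> last xs))"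
proof (cases "length xs = m")
  case len: True
  have last_xs: "m \<noteq> 0 \<Longrightarrow> last xs = xs ! (m - 1)"
    using len by (auto simp: last_conv_nth)
  have entries: "(\<forall>i<Suc m. 1 \<le> (xs @ [a]) ! i \<and> (xs @ [a]) ! i \<le> k) \<longleftrightarrow>
      (\<forall>i<m. 1 \<le> xs ! i \<and> xs ! i \<le> k) \<and> a \<in> {1..k}"
    using len by (auto simp: nth_append less_Suc_eq)
  have steps: "(\<forall>i. i + 1 < Suc m \<longrightarrow>
        (if even i then (xs @ [a]) ! i \<le> (xs @ [a]) ! (i + 1)
         else (xs @ [a]) ! (i + 1) \<le> (xs @ [a]) ! i)) \<longleftrightarrow>
      (\<forall>i. i + 1 < m \<longrightarrow>
        (if even i then xs ! i \<le> xs ! (i + 1) else xs ! (i + 1) \<le> xs ! i)) \<and>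
      (m = 0 \<or> (if even (m - 1) then last xs \<le> a else a \<le> last xs))"
  proof (cases m)
    case (Suc j)
    have "i + 1 < Suc m \<longleftrightarrow> i + 1 < m \<or> i = j" for i
      using Suc by auto
    then show ?thesis
      using len Suc last_xs by (auto simp: nth_append)
  qed simp
  show ?thesis
    unfolding alt_seqs_def mem_Collect_eq using len entries steps by auto
next
  case False
  then show ?thesis by (simp add: alt_seqs_def)
qed

definition alt_end_count :: "nat \<Rightarrow> nat \<Rightarrow> nat \<Rightarrow> nat" where
  "alt_end_count k m t = card {xs \<in> alt_seqs m k. last xs = t}"

lemma card_alt_seqs_filter_last:
  "card {xs \<in> alt_seqs (Suc m) k. P (last xs)} =
    (\<Sum>t | t \<in> {1..k} \<and> P t. alt_end_count k (Suc m) t)"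
proof -
  let ?S = "{xs \<in> alt_seqs (Suc m) k. P (last xs)}"
  have "last ` ?S \<subseteq> {t. t \<in> {1..k} \<and> P t}"
    using last_in_alt_seqs by blast
  from sum.group[OF _ _ this, of "\<lambda>_. 1 :: nat"]
  have "card ?S = (\<Sum>t | t \<in> {1..k} \<and> P t. card {xs \<in> ?S. last xs = t})"
    using finite_alt_seqs by (simp only: card_eq_sum) simp
  also have "\<dots> = (\<Sum>t | t \<in> {1..k} \<and> P t. alt_end_count k (Suc m) t)"
    unfolding alt_end_count_def by (intro sum.cong) (auto intro: arg_cong[where f = card])
  finally show ?thesis .
qed

lemma alt_end_count_Suc:
  assumes "m \<noteq> 0" "a \<in> {1..k}"
  shows "alt_end_count k (Suc m) a =
    card {xs \<in> alt_seqs m k. if even (m - 1) then last xs \<le> a else a \<le> last xs}"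
proof -
  let ?T = "{xs \<in> alt_seqs m k. if even (m - 1) then last xs \<le> a else a \<le> last xs}"
  have "{ys \<in> alt_seqs (Suc m) k. last ys = a} = (\<lambda>xs. xs @ [a]) ` ?T"
  proof (intro equalityI subsetI)
    fix ys assume ys: "ys \<in> {ys \<in> alt_seqs (Suc m) k. last ys = a}"
    then have "ys \<noteq> []" by (auto simp: alt_seqs_def)
    then obtain xs where "ys = xs @ [a]"
      using ys by (metis (mono_tags) append_butlast_last_id mem_Collect_eq)
    with ys assms show "ys \<in> (\<lambda>xs. xs @ [a]) ` ?T"
      by (auto simp: snoc_in_alt_seqs_iff)
  qed (use assms in \<open>auto simp: snoc_in_alt_seqs_iff\<close>)
  moreover have "inj_on (\<lambda>xs. xs @ [a]) ?T"
    by (auto simp: inj_on_def)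
  ultimately show ?thesis
    unfolding alt_end_count_def by (simp add: card_image)
qed

lemma alt_end_count_1:
  assumes "t \<in> {1..k}"
  shows "alt_end_count k 1 t = 1"
proof -
  have "{xs \<in> alt_seqs 1 k. last xs = t} = {[t]}"
    using assms by (auto simp: alt_seqs_def length_Suc_conv)
  then show ?thesis
    by (simp add: alt_end_count_def)
qed

lemma alt_end_count_ascent:
  assumes "b \<in> {1..k}"
  shows "alt_end_count k (2 * n + 2) b = (\<Sum>t = 1..b. alt_end_count k (2 * n + 1) t)"
proof -
  have "alt_end_count k (2 * n + 2) b =
      card {xs \<in> alt_seqs (Suc (2 * n)) k. last xs \<le> b}"
    using alt_end_count_Suc[of "2 * n + 1" b k] assms by simp
  also have "\<dots> = (\<Sum>t | t \<in> {1..k} \<and> t \<le> b. alt_end_count k (2 * n + 1) t)"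
    using card_alt_seqs_filter_last[of "2 * n" k "\<lambda>t. t \<le> b"] by simp
  also have "{t. t \<in> {1..k} \<and> t \<le> b} = {1..b}"
    using assms by auto
  finally show ?thesis .
qed

lemma alt_end_count_descent:
  assumes "c \<in> {1..k}"
  shows "alt_end_count k (2 * n + 3) c = (\<Sum>b = c..k. alt_end_count k (2 * n + 2) b)"
proof -
  have "alt_end_count k (2 * n + 3) c =
      card {xs \<in> alt_seqs (Suc (2 * n + 1)) k. c \<le> last xs}"
    using alt_end_count_Suc[of "2 * n + 2" c k] assms by (simp add: numeral_3_eq_3)
  also have "\<dots> = (\<Sum>b | b \<in> {1..k} \<and> c \<le> b. alt_end_count k (2 * n + 2) b)"
    using card_alt_seqs_filter_last[of "2 * n + 1" k "\<lambda>b. c \<le> b"] by simp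
  also have "{b. b \<in> {1..k} \<and> c \<le> b} = {c..k}"
    using assms by auto
  finally show ?thesis .
qed

text \<open>After a sequence of even length the next step is a descent, which 1 always admits.\<close>

lemma alt_end_count_1_eq_card:
  assumes "k \<ge> 1"
  shows "alt_end_count k (2 * n + 1) 1 = card (alt_seqs (2 * n) k)"
proof (cases n)
  case 0
  then show ?thesis
    using assms alt_end_count_1[of 1 k] by (simp add: alt_seqs_0)
next
  case (Suc n')
  have "alt_end_count k (2 * n + 1) 1 =
      card {xs \<in> alt_seqs (Suc (2 * n' + 1)) k. 1 \<le> last xs}"
    using alt_end_count_Suc[of "2 * n" 1 k] assms Suc by simp
  also have "{xs \<in> alt_seqs (Suc (2 * n' + 1)) k. 1 \<le> last xs} = alt_seqs (2 * n) k"
    using last_in_alt_seqs Suc by fastforce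
  finally show ?thesis .
qed

definition end_gf :: "nat \<Rightarrow> nat \<Rightarrow> real fps" where
  "end_gf k c = Abs_fps (\<lambda>m. if odd m then of_nat (alt_end_count k m c) else 0)"

definition end_upto_gf :: "nat \<Rightarrow> nat \<Rightarrow> real fps" where
  "end_upto_gf k b = fps_X * (\<Sum>c = 1..b. end_gf k c)"

lemma end_upto_gf_Suc: "end_upto_gf k (Suc b) = end_upto_gf k b + fps_X * end_gf k (Suc b)"
  by (simp add: end_upto_gf_def algebra_simps)

lemma end_gf_eq:
  assumes "c \<in> {1..k}"
  shows "end_gf k c = fps_X + fps_X * (\<Sum>b = c..k. end_upto_gf k b)"
proof (rule fps_ext)
  fix m
  have coeff: "fps_nth (fps_X + fps_X * (\<Sum>b = c..k. end_upto_gf k b)) m =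
      (if m = 1 then 1 else 0) +
      (if m < 2 then 0 else \<Sum>b = c..k. \<Sum>t = 1..b. fps_nth (end_gf k t) (m - 2))"
    by (simp add: end_upto_gf_def fps_sum_nth numeral_2_eq_2)
  show "fps_nth (end_gf k c) m = fps_nth (fps_X + fps_X * (\<Sum>b = c..k. end_upto_gf k b)) m"
  proof (cases "odd m")
    case True
    then obtain j where m: "m = 2 * j + 1"
      by (blast elim: oddE)
    show ?thesis
    proof (cases j)
      case 0
      then show ?thesis
        using m coeff alt_end_count_1[OF assms] by (simp add: end_gf_def)
    next
      case (Suc n)
      have "alt_end_count k (2 * n + 3) c = (\<Sum>b = c..k. alt_end_count k (2 * n + 2) b)"
        by (rule alt_end_count_descent[OF assms])
      also have "\<dots> = (\<Sum>b = c..k. \<Sum>t = 1..b. alt_end_count k (2 * n + 1) t)"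
        using assms by (intro sum.cong refl alt_end_count_ascent) auto
      finally show ?thesis
        using m Suc coeff by (simp add: end_gf_def numeral_3_eq_3)
    qed
  next
    case False
    then show ?thesis
      using coeff by (auto simp: end_gf_def)
  qed
qed

lemma end_gf_Suc:
  assumes "c \<in> {1..<k}"
  shows "end_gf k c = end_gf k (Suc c) + fps_X * end_upto_gf k c"
proof -
  have "(\<Sum>b = c..k. end_upto_gf k b) = end_upto_gf k c + (\<Sum>b = Suc c..k. end_upto_gf k b)"
    using assms by (simp add: sum.atLeast_Suc_atMost)
  then show ?thesis
    using assms end_gf_eq[of c k] end_gf_eq[of "Suc c" k] by (simp add: algebra_simps)
qed

lemma end_gf_last:
  assumes "k \<ge> 1"
  shows "end_gf k k = fps_X + fps_X * end_upto_gf k k"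
  using assms end_gf_eq[of k k] by simp

lemma gf_alt_seqs_eq_end_gf:
  assumes "k \<ge> 1"
  shows "Abs_fps (\<lambda>m. if odd m then of_nat (card (alt_seqs (m - 1) k)) else 0) = end_gf k 1"
proof (rule fps_ext)
  fix m
  show "fps_nth (Abs_fps (\<lambda>m. if odd m then of_nat (card (alt_seqs (m - 1) k)) else 0)) m =
      fps_nth (end_gf k 1) m"
    using alt_end_count_1_eq_card[OF assms] by (auto simp: end_gf_def elim!: oddE)
qed

fun chebyshev_fps :: "nat \<Rightarrow> real fps" where
  "chebyshev_fps 0 = 0"
| "chebyshev_fps (Suc j) = cheb_U j (fps_const (1/2) * fps_X)"

lemma chebyshev_fps_rec:
  "chebyshev_fps (Suc (Suc j)) = fps_X * chebyshev_fps (Suc j) - chebyshev_fps j"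
proof -
  have half: "(2 :: real fps) * fps_const (1/2) = 1"
    by (metis fps_const_1_eq_1 fps_const_mult numeral_fps_const field_sum_of_halves mult_2)
  show ?thesis
    by (cases j) (simp_all add: half flip: mult.assoc)
qed

lemma cheb_U_nth_0:
  fixes x :: "'a::comm_ring_1 fps"
  assumes "fps_nth x 0 = 0"
  shows "fps_nth (cheb_U n x) 0 = (if even n then (-1) ^ (n div 2) else 0)"
  using assms by (induction n x rule: cheb_U.induct) (auto simp: mult.assoc)

lemma end_gfs_chebyshev:
  assumes "b \<le> k"
  shows "end_upto_gf k b = - ((-1) ^ b * end_gf k 1 * chebyshev_fps (2 * b))"
    and "b < k \<Longrightarrow> end_gf k (Suc b) = (-1) ^ b * end_gf k 1 * chebyshev_fps (2 * b + 1)"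
proof -
  let ?A = "end_gf k 1"
  have "end_upto_gf k b = - ((-1) ^ b * ?A * chebyshev_fps (2 * b)) \<and>
      (b < k \<longrightarrow> end_gf k (Suc b) = (-1) ^ b * ?A * chebyshev_fps (2 * b + 1))"
    using assms
  proof (induction b)
    case 0
    then show ?case by (simp add: end_upto_gf_def)
  next
    case (Suc b)
    then have IH_upto: "end_upto_gf k b = - ((-1) ^ b * ?A * chebyshev_fps (2 * b))"
      and IH_end: "end_gf k (Suc b) = (-1) ^ b * ?A * chebyshev_fps (2 * b + 1)"
      by simp_all
    have rec_even: "chebyshev_fps (2 * Suc b) =
        fps_X * chebyshev_fps (2 * b + 1) - chebyshev_fps (2 * b)"
      and rec_odd: "chebyshev_fps (2 * Suc b + 1) =
        fps_X * chebyshev_fps (2 * Suc b) - chebyshev_fps (2 * b + 1)"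
      using chebyshev_fps_rec[of "2 * b"] chebyshev_fps_rec[of "2 * b + 1"]
      by (simp_all del: chebyshev_fps.simps)
    have upto: "end_upto_gf k (Suc b) = - ((-1) ^ Suc b * ?A * chebyshev_fps (2 * Suc b))"
      unfolding end_upto_gf_Suc IH_upto IH_end rec_even
      by (simp add: algebra_simps del: chebyshev_fps.simps)
    have "end_gf k (Suc (Suc b)) = (-1) ^ Suc b * ?A * chebyshev_fps (2 * Suc b + 1)"
      if "Suc b < k"
    proof -
      have "end_gf k (Suc (Suc b)) = end_gf k (Suc b) - fps_X * end_upto_gf k (Suc b)"
        using end_gf_Suc[of "Suc b" k] that by simp
      then show ?thesis
        unfolding IH_end upto rec_odd by (simp add: algebra_simps del: chebyshev_fps.simps)
    qed
    with upto show ?case by blast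
  qed
  then show "end_upto_gf k b = - ((-1) ^ b * ?A * chebyshev_fps (2 * b))"
    and "b < k \<Longrightarrow> end_gf k (Suc b) = (-1) ^ b * ?A * chebyshev_fps (2 * b + 1)"
    by simp_all
qed

lemma end_gf_times_chebyshev:
  assumes "k \<ge> 1"
  shows "(-1) ^ k * end_gf k 1 * chebyshev_fps (2 * k + 1) = fps_X"
proof -
  obtain j where k: "k = Suc j"
    using assms by (cases k) auto
  let ?A = "end_gf k 1"
  have rec: "chebyshev_fps (2 * k + 1) =
      fps_X * chebyshev_fps (2 * k) - chebyshev_fps (2 * j + 1)"
    using chebyshev_fps_rec[of "2 * j + 1"] k by (simp del: chebyshev_fps.simps)
  have sign: "(-1) ^ k = - ((-1) ^ j :: real fps)"
    using k by simp
  have "(-1) ^ j * ?A * chebyshev_fps (2 * j + 1) = fps_X + fps_X * end_upto_gf k k"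
    using end_gf_last[OF assms] end_gfs_chebyshev(2)[of j k] k by simp
  also have "end_upto_gf k k = (-1) ^ j * ?A * chebyshev_fps (2 * k)"
    using end_gfs_chebyshev(1)[of k k] sign by simp
  finally show ?thesis
    unfolding rec sign by (simp add: algebra_simps del: chebyshev_fps.simps)
qed

theorem corollary10:
  fixes k :: nat
  assumes "k \<ge> 1"
  shows "Abs_fps (\<lambda>m. if odd m then of_nat (card (alt_seqs (m - 1) k)) else 0)
       = fps_const ((-1) ^ k) * fps_X / cheb_U (2 * k) (fps_const (1/2) * fps_X :: real fps)"
proof -
  let ?A = "end_gf k 1" and ?P = "chebyshev_fps (2 * k + 1)"
  have "fps_nth ?P 0 \<noteq> 0"
    by (simp add: cheb_U_nth_0)
  then have "?P \<noteq> 0"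
    by auto
  have "fps_const ((-1) ^ k) = ((-1) ^ k :: real fps)"
    by (metis fps_const_neg fps_const_1_eq_1 fps_const_power)
  then have "fps_const ((-1) ^ k) * fps_X = (-1) ^ k * ((-1) ^ k * ?A * ?P)"
    using end_gf_times_chebyshev[OF assms] by (simp del: chebyshev_fps.simps)
  also have "\<dots> = ?A * ?P"
    by (simp flip: power_mult_distrib mult.assoc)
  finally have "fps_const ((-1) ^ k) * fps_X / ?P = ?A"
    using \<open>?P \<noteq> 0\<close> by simp
  then show ?thesis
    using gf_alt_seqs_eq_end_gf[OF assms] by simp
qed

end
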